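(* Let $\mathcal{G}=(V,\emptyset,B)$ be a connected bidirected graph with $V=\{1,\dots,p\}$, and let $q\in\mathbb{R}^p$ be a vector with all entries nonzero. Then there exists $\Sigma\in PD(\mathcal{G})$ such that the vector $\Sigma q$ has precisely one nonzero entry.
   Context: $B$ is a set of 2-element subsets of $V$ (bidirected edges); $\mathcal{G}$ is connected if any two vertices are joined by a path of such edges. $PD(\mathcal{G})$ is the set of positive definite $p\times p$ matrices $\Sigma=(\sigma_{ij})$ with $\sigma_{ij}=0$ whenever $i\ne j$ and $\{i,j\}\notin B$. *)

theory Defs
  imports "HOL-Analysis.Analysis"
begin

text \<open>Vertex set V = {1,...,p} is modelled by a finite index type 'n (CARD('n) = p).
  B is a set of 2-element subsets of the vertex set (bidirected edges).\<close>

definition bidirected_edges :: "'n set set \<Rightarrow> bool" where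
  "bidirected_edges B \<longleftrightarrow> (\<forall>e\<in>B. card e = 2)"

definition bd_connected :: "'n set set \<Rightarrow> bool" where
  "bd_connected B \<longleftrightarrow> (\<forall>i j. (\<lambda>x y. {x, y} \<in> B)\<^sup>*\<^sup>* i j)"

definition pos_def_matrix :: "real ^'n ^'n \<Rightarrow> bool" where
  "pos_def_matrix S \<longleftrightarrow> transpose S = S \<and> (\<forall>x. x \<noteq> 0 \<longrightarrow> x \<bullet> (S *v x) > 0)"

definition PD :: "'n set set \<Rightarrow> (real ^'n ^'n) set" where
  "PD B = {S. pos_def_matrix S \<and> (\<forall>i j. i \<noteq> j \<and> {i, j} \<notin> B \<longrightarrow> S $ i $ j = 0)}"

end

theory Submission
  imports Defs
begin

text \<open>Ground the Laplacian of the graph at a root \<open>r\<close>: \<open>L = D - A + e\<^sub>r e\<^sub>r\<^sup>T\<close>.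
  Its quadratic form is \<open>y\<^sub>r\<^sup>2 + \<Sum>\<^bsub>{i,j}\<in>B\<^esub> (y\<^sub>i - y\<^sub>j)\<^sup>2\<close>, which on a connected graph
  vanishes only at \<open>y = 0\<close>, so \<open>L\<close> is positive definite, and its row sums give \<open>L 1 = e\<^sub>r\<close>.
  The diagonal congruence \<open>\<Sigma> = Q\<^sup>-\<^sup>1 L Q\<^sup>-\<^sup>1\<close> with \<open>Q = diag q\<close> keeps positive definiteness
  and the sparsity pattern, and \<open>\<Sigma> q = Q\<^sup>-\<^sup>1 L 1 = Q\<^sup>-\<^sup>1 e\<^sub>r\<close> has a single nonzero entry.\<close>

definition bd_adjacency :: "'n set set \<Rightarrow> 'n \<Rightarrow> 'n \<Rightarrow> real" where
  "bd_adjacency B i j = (if i \<noteq> j \<and> {i, j} \<in> B then 1 else 0)"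

definition bd_degree :: "'n::finite set set \<Rightarrow> 'n \<Rightarrow> real" where
  "bd_degree B i = (\<Sum>j\<in>UNIV. bd_adjacency B i j)"

definition grounded_laplacian :: "'n::finite set set \<Rightarrow> 'n \<Rightarrow> real ^'n ^'n" where
  "grounded_laplacian B r =
     (\<chi> i j. (if i = j then bd_degree B i + (if i = r then 1 else 0) else 0) - bd_adjacency B i j)"

definition diag_congruence :: "real ^'n \<Rightarrow> real ^'n ^'n \<Rightarrow> real ^'n ^'n" where
  "diag_congruence d S = (\<chi> i j. d $ i * S $ i $ j * d $ j)"

lemma bd_adjacency_sym: "bd_adjacency B i j = bd_adjacency B j i"
  by (auto simp: bd_adjacency_def insert_commute)

lemma bd_adjacency_nonneg: "bd_adjacency B i j \<ge> 0"
  by (simp add: bd_adjacency_def)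

lemma grounded_laplacian_mult_one: "grounded_laplacian B r *v 1 = axis r 1"
proof -
  have "(\<Sum>j\<in>UNIV. grounded_laplacian B r $ i $ j) = (if i = r then 1 else 0)" for i
    by (simp add: grounded_laplacian_def sum_subtractf bd_degree_def)
  then show ?thesis
    by (simp add: vec_eq_iff matrix_vector_mult_def axis_def)
qed

lemma grounded_laplacian_quadratic_form:
  fixes y :: "real ^'n::finite"
  shows "y \<bullet> (grounded_laplacian B r *v y) =
    (y $ r)\<^sup>2 + (\<Sum>i\<in>UNIV. \<Sum>j\<in>UNIV. bd_adjacency B i j * (y $ i - y $ j)\<^sup>2) / 2"
proof -
  let ?A = "bd_adjacency B" and ?d = "bd_degree B"
  let ?D = "\<lambda>i. ?d i + (if i = r then 1 else 0)"
  have "y \<bullet> (grounded_laplacian B r *v y) =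
      (\<Sum>i\<in>UNIV. \<Sum>j\<in>UNIV. ((if i = j then ?D i else 0) - ?A i j) * y $ i * y $ j)"
    by (simp add: inner_vec_def matrix_vector_mult_def grounded_laplacian_def sum_distrib_left
        algebra_simps)
  also have "\<dots> = (\<Sum>i\<in>UNIV. ?D i * y $ i * y $ i)
      - (\<Sum>i\<in>UNIV. \<Sum>j\<in>UNIV. ?A i j * y $ i * y $ j)"
    by (simp add: left_diff_distrib sum_subtractf if_distrib[where f="\<lambda>z. z * _"] cong: if_cong)
  also have "(\<Sum>i\<in>UNIV. ?D i * y $ i * y $ i) = (\<Sum>i\<in>UNIV. ?d i * (y $ i)\<^sup>2) + (y $ r)\<^sup>2"
    by (simp add: distrib_right power2_eq_square mult.assoc sum.distrib if_distrib[where f="\<lambda>z. z * _"]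
        cong: if_cong)
  also have "(\<Sum>i\<in>UNIV. ?d i * (y $ i)\<^sup>2) = (\<Sum>i\<in>UNIV. \<Sum>j\<in>UNIV. ?A i j * (y $ i)\<^sup>2)"
    by (simp add: bd_degree_def sum_distrib_right)
  moreover have "(\<Sum>i\<in>UNIV. \<Sum>j\<in>UNIV. ?A i j * (y $ i)\<^sup>2) =
      (\<Sum>i\<in>UNIV. \<Sum>j\<in>UNIV. ?A i j * (y $ j)\<^sup>2)"
    by (subst sum.swap) (simp add: bd_adjacency_sym)
  moreover have "(\<Sum>i\<in>UNIV. \<Sum>j\<in>UNIV. ?A i j * (y $ i - y $ j)\<^sup>2) =
      (\<Sum>i\<in>UNIV. \<Sum>j\<in>UNIV. ?A i j * (y $ i)\<^sup>2) + (\<Sum>i\<in>UNIV. \<Sum>j\<in>UNIV. ?A i j * (y $ j)\<^sup>2)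
      - 2 * (\<Sum>i\<in>UNIV. \<Sum>j\<in>UNIV. ?A i j * y $ i * y $ j)"
    by (simp add: power2_diff algebra_simps sum.distrib sum_subtractf sum_distrib_left)
  ultimately show ?thesis
    by simp
qed

lemma bd_adjacency_weighted_sum_eq_0_imp_edge_eq:
  fixes f :: "'n::finite \<Rightarrow> real"
  assumes "(\<Sum>i\<in>UNIV. \<Sum>j\<in>UNIV. bd_adjacency B i j * (f i - f j)\<^sup>2) = 0"
    and "{a, b} \<in> B"
  shows "f a = f b"
proof (cases "a = b")
  case False
  have nonneg: "bd_adjacency B i j * (f i - f j)\<^sup>2 \<ge> 0" for i j
    by (simp add: bd_adjacency_nonneg)
  then have "(\<Sum>j\<in>UNIV. bd_adjacency B a j * (f a - f j)\<^sup>2) = 0"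
    using assms(1) by (subst (asm) sum_nonneg_eq_0_iff) (auto intro: sum_nonneg)
  then have "bd_adjacency B a b * (f a - f b)\<^sup>2 = 0"
    using nonneg by (subst (asm) sum_nonneg_eq_0_iff) auto
  with False assms(2) show ?thesis
    by (simp add: bd_adjacency_def)
qed simp

lemma pos_def_grounded_laplacian:
  assumes "bd_connected B"
  shows "pos_def_matrix (grounded_laplacian B r)"
  unfolding pos_def_matrix_def
proof (intro conjI allI impI)
  show "transpose (grounded_laplacian B r) = grounded_laplacian B r"
    by (simp add: transpose_def grounded_laplacian_def vec_eq_iff bd_adjacency_sym)
next
  fix y :: "real ^'a"
  assume "y \<noteq> 0"
  let ?E = "\<Sum>i\<in>UNIV. \<Sum>j\<in>UNIV. bd_adjacency B i j * (y $ i - y $ j)\<^sup>2"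
  have E_nonneg: "?E \<ge> 0"
    by (intro sum_nonneg mult_nonneg_nonneg bd_adjacency_nonneg) simp
  show "y \<bullet> (grounded_laplacian B r *v y) > 0"
  proof (rule ccontr)
    assume "\<not> ?thesis"
    then have "(y $ r)\<^sup>2 + ?E / 2 \<le> 0"
      by (simp add: grounded_laplacian_quadratic_form)
    with E_nonneg have "(y $ r)\<^sup>2 = 0" and E: "?E = 0"
      using zero_le_power2[of "y $ r"] by linarith+
    then have yr: "y $ r = 0"
      by simp
    have "y $ j = 0" for j
    proof -
      from assms have "(\<lambda>a b. {a, b} \<in> B)\<^sup>*\<^sup>* r j"
        by (simp add: bd_connected_def)
      then have "y $ j = y $ r"
        by induction (auto dest: bd_adjacency_weighted_sum_eq_0_imp_edge_eq[OF E])
      with yr show ?thesis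
        by simp
    qed
    then have "y = 0"
      by (simp add: vec_eq_iff)
    with \<open>y \<noteq> 0\<close> show False ..
  qed
qed

lemma grounded_laplacian_in_PD:
  assumes "bd_connected B"
  shows "grounded_laplacian B r \<in> PD B"
  using pos_def_grounded_laplacian[OF assms]
  by (simp add: PD_def grounded_laplacian_def bd_adjacency_def)

lemma diag_congruence_mult_vec: "diag_congruence d S *v x = d * (S *v (d * x))"
  by (simp add: vec_eq_iff diag_congruence_def matrix_vector_mult_def sum_distrib_left
      mult.assoc)

lemma pos_def_diag_congruence:
  assumes "\<forall>i. d $ i \<noteq> 0" and "pos_def_matrix S"
  shows "pos_def_matrix (diag_congruence d S)"
  unfolding pos_def_matrix_def
proof (intro conjI allI impI)
  from assms(2) have "transpose S = S"
    by (simp add: pos_def_matrix_def)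
  then have "S $ j $ i = S $ i $ j" for i j
    by (metis transpose_def vec_lambda_beta)
  then show "transpose (diag_congruence d S) = diag_congruence d S"
    by (simp add: transpose_def diag_congruence_def vec_eq_iff)
next
  fix x :: "real ^'a"
  assume "x \<noteq> 0"
  with assms(1) have "d * x \<noteq> 0"
    by (auto simp: vec_eq_iff)
  with assms(2) have "(d * x) \<bullet> (S *v (d * x)) > 0"
    by (simp add: pos_def_matrix_def)
  also have "(d * x) \<bullet> (S *v (d * x)) = x \<bullet> (diag_congruence d S *v x)"
    by (simp add: diag_congruence_mult_vec inner_vec_def mult.assoc mult.left_commute)
  finally show "x \<bullet> (diag_congruence d S *v x) > 0" .
qed

lemma diag_congruence_in_PD:
  assumes "\<forall>i. d $ i \<noteq> 0" and "S \<in> PD B"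
  shows "diag_congruence d S \<in> PD B"
  using assms pos_def_diag_congruence[OF assms(1)]
  by (simp add: PD_def diag_congruence_def)

theorem lemma7:
  fixes B :: "'n::finite set set" and q :: "real ^'n"
  assumes "bidirected_edges B"
    and "bd_connected B"
    and "\<forall>i. q $ i \<noteq> 0"
  shows "\<exists>S \<in> PD B. \<exists>!i. (S *v q) $ i \<noteq> 0"
proof -
  obtain r :: 'n where True by simp
  define d :: "real ^'n" where "d = (\<chi> i. 1 / q $ i)"
  define S where "S = diag_congruence d (grounded_laplacian B r)"
  have "d * q = 1"
    using assms(3) by (simp add: d_def vec_eq_iff)
  then have Sq: "S *v q = d * axis r 1"
    by (simp add: S_def diag_congruence_mult_vec grounded_laplacian_mult_one)
  have "S \<in> PD B"
    unfolding S_def using assms(3)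
    by (intro diag_congruence_in_PD grounded_laplacian_in_PD assms(2)) (simp add: d_def)
  moreover have "\<exists>!i. (S *v q) $ i \<noteq> 0"
    using assms(3) by (intro ex1I[of _ r]) (auto simp: Sq d_def axis_def split: if_splits)
  ultimately show ?thesis
    by blast
qed

end
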